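(* Let $A$ be a complex evolution algebra which is not a non-zero trivial evolution algebra, with natural basis $B=\{e_i:i\in\Lambda\}$ and $e_j^2=\sum_i\omega_{ij}e_i$. Let $0\neq a=\sum_{i\in\Lambda_a}\alpha_ie_i\in A$, and set $B^0(a)=\{e_i:i\in\Lambda_a\}$ and $B^1(a)=\bigcup_{i\in\Lambda_a}\{e_j:\omega_{ji}\neq0\}$. Enumerate so that $B^0(a)=\{e_1,\dots,e_k\}$ and $B^0(a)\cup B^1(a)=\{e_1,\dots,e_k,e_{k+1},\dots,e_m\}$, and put $\alpha_{k+1}=\dots=\alpha_m=0$, $W_m=(\omega_{ij})_{i,j=1}^m$, $D=\mathrm{diag}(\alpha_1,\dots,\alpha_m)$. Then for $\lambda\in\mathbb{C}$: (i) $\lambda\in\sigma^A_m(a)$ if and only if $\lambda=0$ or $\lambda$ is an eigenvalue of $W_mD$; (ii) $\lambda\in\sigma^A(a)$ if and only if $\lambda=0$ or the system $(W_mD-\lambda I_m)\beta=(\alpha_1,\dots,\alpha_m)^T$ has no solution $\beta\in\mathbb{C}^m$ (in which case $\lambda\in\sigma^A_m(a)$).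
   Context: An evolution algebra is an algebra with a basis $\{e_i:i\in\Lambda\}$ (natural basis) with $e_ie_j=0$ for $i\neq j$; each $e_j^2$ has finitely many nonzero coefficients. A non-zero trivial evolution algebra has a natural basis with $e_i^2=\omega_{ii}e_i$, $\omega_{ii}\neq0$ for all $i$. Support $\Lambda_a=\{i:\alpha_i\neq0\}$. For a complex algebra $A$: if $A$ has a unit $e$ put $\tilde A=A$, else $\tilde A=A\oplus\mathbb{C}\mathbf1$ is the unitization with product $(a+\lambda\mathbf1)(b+\mu\mathbf1)=ab+\lambda b+\mu a+\lambda\mu\mathbf1$ and $e=\mathbf1$. $x\in\tilde A$ is invertible if it has a left and a right inverse, and m-invertible if $L_x(y)=xy$ and $R_x(y)=yx$ are bijective on $\tilde A$. $\sigma^A(a)=\{\lambda:a-\lambda e\text{ not invertible in }\tilde A\}$ and $\sigma^A_m(a)=\{\lambda:a-\lambda e\text{ not m-invertible in }\tilde A\}$. *)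

theory Defs
  imports Complex_Main "Jordan_Normal_Form.Char_Poly"
begin

text \<open>A complex evolution algebra with natural basis indexed by the type 'i.
  Elements are finitely supported coefficient functions x (x = sum of x i e_i).
  The structure constants are w i j, where e_j^2 = sum_i w i j e_i.\<close>

definition evol_carrier :: "('i \<Rightarrow> complex) set" where
  "evol_carrier = {x. finite {i. x i \<noteq> 0}}"

definition evol_coeffs :: "('i \<Rightarrow> 'i \<Rightarrow> complex) \<Rightarrow> bool" where
  "evol_coeffs w \<longleftrightarrow> (\<forall>j. finite {i. w i j \<noteq> 0})"

text \<open>Product: (sum x_j e_j)(sum y_j e_j) = sum_j x_j y_j e_j^2.\<close>
definition evol_mult :: "('i \<Rightarrow> 'i \<Rightarrow> complex) \<Rightarrow> ('i \<Rightarrow> complex) \<Rightarrow> ('i \<Rightarrow> complex) \<Rightarrow> ('i \<Rightarrow> complex)" where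
  "evol_mult w x y = (\<lambda>i. \<Sum>j\<in>{j. x j \<noteq> 0}. x j * y j * w i j)"

definition supp_el :: "('i \<Rightarrow> complex) \<Rightarrow> 'i set" where
  "supp_el x = {i. x i \<noteq> 0}"

definition is_basis_of_A :: "('i \<Rightarrow> complex) set \<Rightarrow> bool" where
  "is_basis_of_A S \<longleftrightarrow> S \<subseteq> evol_carrier
     \<and> (\<forall>T c. T \<subseteq> S \<and> finite T \<and> (\<lambda>i. \<Sum>t\<in>T. c t * t i) = (\<lambda>i. 0) \<longrightarrow> (\<forall>t\<in>T. c t = 0))
     \<and> (\<forall>x\<in>evol_carrier. \<exists>T c. T \<subseteq> S \<and> finite T \<and> x = (\<lambda>i. \<Sum>t\<in>T. c t * t i))"

definition is_natural_basis :: "('i \<Rightarrow> 'i \<Rightarrow> complex) \<Rightarrow> ('i \<Rightarrow> complex) set \<Rightarrow> bool" where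
  "is_natural_basis w S \<longleftrightarrow> is_basis_of_A S
     \<and> (\<forall>s\<in>S. \<forall>t\<in>S. s \<noteq> t \<longrightarrow> evol_mult w s t = (\<lambda>i. 0))"

text \<open>Non-zero trivial evolution algebra: A is non-zero and has a natural basis with
  e^2 = c e, c nonzero, for every basis element. (A is non-zero automatically,
  since the index type is non-empty.)\<close>
definition nonzero_trivial_evol :: "('i \<Rightarrow> 'i \<Rightarrow> complex) \<Rightarrow> bool" where
  "nonzero_trivial_evol w \<longleftrightarrow> evol_carrier \<noteq> {(\<lambda>i::'i. 0)} \<and>
     (\<exists>S. is_natural_basis w S \<and> (\<forall>s\<in>S. \<exists>c. c \<noteq> 0 \<and> evol_mult w s s = (\<lambda>i. c * s i)))"

definition is_unit_of_A :: "('i \<Rightarrow> 'i \<Rightarrow> complex) \<Rightarrow> ('i \<Rightarrow> complex) \<Rightarrow> bool" where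
  "is_unit_of_A w u \<longleftrightarrow> u \<in> evol_carrier \<and>
     (\<forall>x\<in>evol_carrier. evol_mult w u x = x \<and> evol_mult w x u = x)"

text \<open>Unitization A + C1, elements (x, mu) standing for x + mu 1.\<close>
definition unitz_mult :: "('i \<Rightarrow> 'i \<Rightarrow> complex) \<Rightarrow> ('i \<Rightarrow> complex) \<times> complex \<Rightarrow> ('i \<Rightarrow> complex) \<times> complex \<Rightarrow> ('i \<Rightarrow> complex) \<times> complex" where
  "unitz_mult w p q = (\<lambda>i. evol_mult w (fst p) (fst q) i + snd p * fst q i + snd q * fst p i, snd p * snd q)"

definition invertible_in :: "'a set \<Rightarrow> ('a \<Rightarrow> 'a \<Rightarrow> 'a) \<Rightarrow> 'a \<Rightarrow> 'a \<Rightarrow> bool" where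
  "invertible_in C m e x \<longleftrightarrow> (\<exists>y\<in>C. m y x = e) \<and> (\<exists>z\<in>C. m x z = e)"

definition m_invertible_in :: "'a set \<Rightarrow> ('a \<Rightarrow> 'a \<Rightarrow> 'a) \<Rightarrow> 'a \<Rightarrow> bool" where
  "m_invertible_in C m x \<longleftrightarrow> bij_betw (m x) C C \<and> bij_betw (\<lambda>y. m y x) C C"

definition evol_spectrum :: "('i \<Rightarrow> 'i \<Rightarrow> complex) \<Rightarrow> ('i \<Rightarrow> complex) \<Rightarrow> complex set" where
  "evol_spectrum w a =
     (if \<exists>u. is_unit_of_A w u then
        (let u = (SOME u. is_unit_of_A w u) in
          {l. \<not> invertible_in evol_carrier (evol_mult w) u (\<lambda>i. a i - l * u i)})
      else {l. \<not> invertible_in (evol_carrier \<times> UNIV) (unitz_mult w) ((\<lambda>i. 0), 1) (a, - l)})"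

definition evol_m_spectrum :: "('i \<Rightarrow> 'i \<Rightarrow> complex) \<Rightarrow> ('i \<Rightarrow> complex) \<Rightarrow> complex set" where
  "evol_m_spectrum w a =
     (if \<exists>u. is_unit_of_A w u then
        (let u = (SOME u. is_unit_of_A w u) in
          {l. \<not> m_invertible_in evol_carrier (evol_mult w) (\<lambda>i. a i - l * u i)})
      else {l. \<not> m_invertible_in (evol_carrier \<times> UNIV) (unitz_mult w) (a, - l)})"

definition B1_idx :: "('i \<Rightarrow> 'i \<Rightarrow> complex) \<Rightarrow> ('i \<Rightarrow> complex) \<Rightarrow> 'i set" where
  "B1_idx w a = {j. \<exists>i\<in>supp_el a. w j i \<noteq> 0}"

text \<open>W_m and D w.r.t. an enumeration f of B^0(a) union B^1(a) by 0..m-1.\<close>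
definition W_mat :: "('i \<Rightarrow> 'i \<Rightarrow> complex) \<Rightarrow> (nat \<Rightarrow> 'i) \<Rightarrow> nat \<Rightarrow> complex mat" where
  "W_mat w f m = mat m m (\<lambda>(i, j). w (f i) (f j))"

definition D_mat :: "('i \<Rightarrow> complex) \<Rightarrow> (nat \<Rightarrow> 'i) \<Rightarrow> nat \<Rightarrow> complex mat" where
  "D_mat a f m = mat m m (\<lambda>(i, j). if i = j then a (f i) else 0)"

end

theory Submission
  imports Defs
begin

text \<open>An evolution algebra with a unit is trivial, so both spectra are taken in the unitization,
  where (a - \<lambda>)(y + \<nu>1) = (ay - \<lambda>y + \<nu>a) - \<lambda>\<nu>1. The product ay vanishes outside
  B0(a) \<union> B1(a), and in the coordinates of this finite set it is W_m D applied to y. Hence for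
  \<lambda> \<noteq> 0, a - \<lambda> is invertible iff ay - \<lambda>y = a is solvable, i.e. iff (W_m D - \<lambda>I)\<beta> = \<alpha>
  has a solution, and L_(a - \<lambda>) is bijective iff y \<mapsto> ay - \<lambda>y is, i.e. iff \<lambda> is not an
  eigenvalue of W_m D. For \<lambda> = 0 the scalar part of every product (a - \<lambda>)(y + \<nu>1) is 0.\<close>

lemma evol_mult_comm:
  assumes "x \<in> evol_carrier" "y \<in> evol_carrier"
  shows "evol_mult w x y = evol_mult w y x"
proof
  fix i
  let ?X = "{j. x j \<noteq> 0}" and ?Y = "{j. y j \<noteq> 0}"
  have fin: "finite (?X \<union> ?Y)" using assms by (simp add: evol_carrier_def)
  have "evol_mult w x y i = (\<Sum>j\<in>?X \<union> ?Y. x j * y j * w i j)"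
    unfolding evol_mult_def by (rule sum.mono_neutral_left) (use fin in auto)
  moreover have "evol_mult w y x i = (\<Sum>j\<in>?X \<union> ?Y. y j * x j * w i j)"
    unfolding evol_mult_def by (rule sum.mono_neutral_left) (use fin in auto)
  ultimately show "evol_mult w x y i = evol_mult w y x i" by (simp add: ac_simps)
qed

lemma evol_carrier_supp_subset:
  assumes "x \<in> evol_carrier" "y \<in> evol_carrier" "{i. z i \<noteq> 0} \<subseteq> {i. x i \<noteq> 0} \<union> {i. y i \<noteq> 0}"
  shows "z \<in> evol_carrier"
  using assms unfolding evol_carrier_def by (auto intro: finite_subset)

lemma evol_mult_carrier:
  assumes "evol_coeffs w" "x \<in> evol_carrier"
  shows "evol_mult w x y \<in> evol_carrier"
proof -
  have "evol_mult w x y i = 0" if "\<forall>j. x j \<noteq> 0 \<longrightarrow> w i j = 0" for i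
    using that by (simp add: evol_mult_def)
  then have "{i. evol_mult w x y i \<noteq> 0} \<subseteq> (\<Union>j\<in>{j. x j \<noteq> 0}. {i. w i j \<noteq> 0})"
    by blast
  moreover have "finite (\<Union>j\<in>{j. x j \<noteq> 0}. {i. w i j \<noteq> 0})"
    using assms by (simp add: evol_carrier_def evol_coeffs_def)
  ultimately show ?thesis
    unfolding evol_carrier_def using finite_subset by blast
qed

lemma m_invertible_in_imp_invertible_in:
  assumes "m_invertible_in C m x" "e \<in> C"
  shows "invertible_in C m e x"
  using assms unfolding m_invertible_in_def invertible_in_def bij_betw_def by (metis imageE)

subsection \<open>Evolution algebras with a unit are trivial\<close>

definition std_basis :: "'i \<Rightarrow> 'i \<Rightarrow> complex" where
  "std_basis j = (\<lambda>i. if i = j then 1 else 0)"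

lemma std_basis_carrier: "std_basis j \<in> evol_carrier"
proof -
  have "{i. std_basis j i \<noteq> 0} = {j}" by (auto simp: std_basis_def)
  then show ?thesis by (simp add: evol_carrier_def)
qed

lemma std_basis_eq_iff: "std_basis j = std_basis k \<longleftrightarrow> j = k"
  by (metis std_basis_def zero_neq_one)

lemma evol_mult_std_basis:
  assumes "x \<in> evol_carrier"
  shows "evol_mult w x (std_basis j) = (\<lambda>i. x j * w i j)"
proof
  fix i
  have "evol_mult w x (std_basis j) i = (\<Sum>k\<in>{k. x k \<noteq> 0}. if k = j then x j * w i j else 0)"
    unfolding evol_mult_def by (rule sum.cong) (auto simp: std_basis_def)
  also have "\<dots> = x j * w i j"
    using assms by (simp add: evol_carrier_def sum.delta')
  finally show "evol_mult w x (std_basis j) i = x j * w i j" .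
qed

lemma std_basis_expansion:
  assumes "finite X" "{j. x j \<noteq> 0} \<subseteq> X"
  shows "x = (\<lambda>i. \<Sum>j\<in>X. x j * std_basis j i)"
proof
  fix i
  have "(\<Sum>j\<in>X. x j * std_basis j i) = (\<Sum>j\<in>X. if j = i then x i else 0)"
    by (rule sum.cong) (auto simp: std_basis_def)
  then show "x i = (\<Sum>j\<in>X. x j * std_basis j i)"
    using assms by (auto simp: sum.delta)
qed

lemma is_basis_of_A_std_basis: "is_basis_of_A (range std_basis)"
  unfolding is_basis_of_A_def
proof (intro conjI allI impI ballI)
  show "range std_basis \<subseteq> evol_carrier" using std_basis_carrier by auto
next
  fix T c t
  assume "T \<subseteq> range std_basis \<and> finite T \<and> (\<lambda>i. \<Sum>t\<in>T. c t * t i) = (\<lambda>i. 0)"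
  then have sub: "T \<subseteq> range std_basis" and fin: "finite T"
    and zero: "(\<lambda>i. \<Sum>t\<in>T. c t * t i) = (\<lambda>i. 0)" by blast+
  assume t: "t \<in> T"
  obtain j where tj: "t = std_basis j" using sub t by blast
  have "c t = (\<Sum>s\<in>T. if s = t then c s else 0)" using fin t by (simp add: sum.delta')
  also have "\<dots> = (\<Sum>s\<in>T. c s * s j)"
  proof (rule sum.cong)
    fix s assume "s \<in> T"
    then obtain k where sk: "s = std_basis k" using sub by blast
    have "s = t \<longleftrightarrow> k = j" unfolding sk tj by (rule std_basis_eq_iff)
    then show "(if s = t then c s else 0) = c s * s j"
      unfolding sk by (simp add: std_basis_def)
  qed (rule refl)
  also have "\<dots> = 0" using fun_cong[OF zero, of j] by (simp only:)
  finally show "c t = 0" .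
next
  fix x :: "'a \<Rightarrow> complex" assume "x \<in> evol_carrier"
  then have fin: "finite {j. x j \<noteq> 0}" by (simp add: evol_carrier_def)
  have inj: "inj std_basis" by (simp add: inj_def std_basis_eq_iff)
  have "x = (\<lambda>i. \<Sum>j | x j \<noteq> 0. x j * std_basis j i)"
    by (rule std_basis_expansion[OF fin order_refl])
  also have "\<dots> = (\<lambda>i. \<Sum>t\<in>std_basis ` {j. x j \<noteq> 0}. x (the_inv std_basis t) * t i)"
    by (simp add: sum.reindex[OF inj_on_subset[OF inj subset_UNIV]] the_inv_f_f[OF inj])
  finally have expansion: "x = (\<lambda>i. \<Sum>t\<in>std_basis ` {j. x j \<noteq> 0}. x (the_inv std_basis t) * t i)" .
  show "\<exists>T c. T \<subseteq> range std_basis \<and> finite T \<and> x = (\<lambda>i. \<Sum>t\<in>T. c t * t i)"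
    by (intro exI[of _ "std_basis ` {j. x j \<noteq> 0}"] exI[of _ "\<lambda>t. x (the_inv std_basis t)"] conjI
        image_mono subset_UNIV finite_imageI fin expansion)
qed

lemma is_natural_basis_std_basis:
  fixes w :: "'i \<Rightarrow> 'i \<Rightarrow> complex"
  shows "is_natural_basis w (range std_basis)"
  unfolding is_natural_basis_def
proof (intro conjI is_basis_of_A_std_basis ballI impI)
  fix s t :: "'i \<Rightarrow> complex"
  assume "s \<in> range std_basis" "t \<in> range std_basis" "s \<noteq> t"
  then obtain j k where "s = std_basis j" "t = std_basis k" "j \<noteq> k" by auto
  then show "evol_mult w s t = (\<lambda>i. 0)"
    by (simp add: evol_mult_std_basis[OF std_basis_carrier]) (simp add: std_basis_def)
qed

lemma unit_imp_nonzero_trivial_evol: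
  fixes w :: "'i \<Rightarrow> 'i \<Rightarrow> complex"
  assumes "is_unit_of_A w u"
  shows "nonzero_trivial_evol w"
proof -
  have u: "u \<in> evol_carrier" using assms by (simp add: is_unit_of_A_def)
  have "\<forall>x\<in>evol_carrier. evol_mult w u x = x" using assms by (simp add: is_unit_of_A_def)
  then have unit: "evol_mult w u (std_basis j) = std_basis j" for j
    using std_basis_carrier[of j] by (rule bspec)
  have delta: "u j * w i j = std_basis j i" for i j
    using fun_cong[OF unit[of j], of i] by (simp add: evol_mult_std_basis[OF u])
  have diag: "w j j \<noteq> 0" for j
    using delta[where i = j and j = j] by (auto simp: std_basis_def)
  have offdiag: "w i j = 0" if "i \<noteq> j" for i j
    using delta[where i = i and j = j] delta[where i = j and j = j] that by (auto simp: std_basis_def)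
  have square: "evol_mult w (std_basis j) (std_basis j) = (\<lambda>i. w j j * std_basis j i)" for j
    unfolding evol_mult_std_basis[OF std_basis_carrier] by (rule ext) (auto simp: std_basis_def offdiag)
  have trivial: "\<forall>s\<in>range std_basis. \<exists>c. c \<noteq> 0 \<and> evol_mult w s s = (\<lambda>i. c * s i)"
  proof
    fix s :: "'i \<Rightarrow> complex" assume "s \<in> range std_basis"
    then obtain j where s: "s = std_basis j" by blast
    show "\<exists>c. c \<noteq> 0 \<and> evol_mult w s s = (\<lambda>i. c * s i)"
      unfolding s by (intro exI[of _ "w j j"] conjI diag square)
  qed
  have "std_basis undefined \<noteq> (\<lambda>i::'i. 0)"
    by (metis std_basis_def zero_neq_one)
  then have nonzero: "evol_carrier \<noteq> {\<lambda>i::'i. 0}"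
    using std_basis_carrier[of undefined] by (metis singletonD)
  show ?thesis
    unfolding nonzero_trivial_evol_def
    by (intro conjI exI[of _ "range std_basis"] nonzero is_natural_basis_std_basis trivial)
qed

definition shifted_left_mult :: "('i \<Rightarrow> 'i \<Rightarrow> complex) \<Rightarrow> ('i \<Rightarrow> complex) \<Rightarrow> complex \<Rightarrow> ('i \<Rightarrow> complex) \<Rightarrow> ('i \<Rightarrow> complex)" where
  "shifted_left_mult w a l y = (\<lambda>i. evol_mult w a y i - l * y i)"

lemma shifted_left_mult_diff:
  "shifted_left_mult w a l (\<lambda>i. y i - z i) = (\<lambda>i. shifted_left_mult w a l y i - shifted_left_mult w a l z i)"
  by (simp add: shifted_left_mult_def evol_mult_def sum_subtractf algebra_simps)

lemma shifted_left_mult_scale: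
  "shifted_left_mult w a l (\<lambda>i. c * y i) = (\<lambda>i. c * shifted_left_mult w a l y i)"
  by (simp add: shifted_left_mult_def evol_mult_def sum_distrib_left algebra_simps)

lemma shifted_left_mult_carrier:
  assumes "evol_coeffs w" "a \<in> evol_carrier" "y \<in> evol_carrier"
  shows "shifted_left_mult w a l y \<in> evol_carrier"
  by (rule evol_carrier_supp_subset[OF evol_mult_carrier[OF assms(1,2)] assms(3)])
    (auto simp: shifted_left_mult_def)

lemma unitz_mult_shifted:
  "unitz_mult w (a, - l) (y, \<nu>) = (\<lambda>i. shifted_left_mult w a l y i + \<nu> * a i, - l * \<nu>)"
  by (simp add: unitz_mult_def shifted_left_mult_def algebra_simps)

lemma unitz_mult_comm:
  assumes "x \<in> evol_carrier" "y \<in> evol_carrier"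
  shows "unitz_mult w (x, \<mu>) (y, \<nu>) = unitz_mult w (y, \<nu>) (x, \<mu>)"
  using evol_mult_comm[OF assms, of w] by (simp add: unitz_mult_def ac_simps)

abbreviation unitz_carrier :: "(('i \<Rightarrow> complex) \<times> complex) set" where
  "unitz_carrier \<equiv> evol_carrier \<times> UNIV"

lemma not_invertible_unitz_zero:
  "\<not> invertible_in unitz_carrier (unitz_mult w) ((\<lambda>i. 0), 1) (a, 0)"
  by (auto simp: invertible_in_def unitz_mult_def)

lemma invertible_unitz_iff:
  assumes l: "l \<noteq> 0" and a: "a \<in> evol_carrier"
  shows "invertible_in unitz_carrier (unitz_mult w) ((\<lambda>i. 0), 1) (a, - l)
    \<longleftrightarrow> (\<exists>y\<in>evol_carrier. shifted_left_mult w a l y = a)"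
proof
  assume "invertible_in unitz_carrier (unitz_mult w) ((\<lambda>i. 0), 1) (a, - l)"
  then obtain y \<nu> where y: "y \<in> evol_carrier" and "unitz_mult w (a, - l) (y, \<nu>) = ((\<lambda>i. 0), 1)"
    unfolding invertible_in_def by auto
  then have Ty: "shifted_left_mult w a l y = (\<lambda>i. - \<nu> * a i)" and \<nu>: "- l * \<nu> = 1"
    by (auto simp: unitz_mult_shifted fun_eq_iff eq_neg_iff_add_eq_0)
  have "shifted_left_mult w a l (\<lambda>i. l * y i) = (\<lambda>i. (- l * \<nu>) * a i)"
    using Ty by (simp add: shifted_left_mult_scale algebra_simps)
  with \<nu> have "shifted_left_mult w a l (\<lambda>i. l * y i) = a" by simp
  moreover have "(\<lambda>i. l * y i) \<in> evol_carrier" using y l by (simp add: evol_carrier_def)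
  ultimately show "\<exists>y\<in>evol_carrier. shifted_left_mult w a l y = a" by blast
next
  assume "\<exists>y\<in>evol_carrier. shifted_left_mult w a l y = a"
  then obtain y where y: "y \<in> evol_carrier" and "shifted_left_mult w a l y = a" by blast
  let ?inv = "(\<lambda>i. y i / l, - 1 / l)"
  have right: "unitz_mult w (a, - l) ?inv = ((\<lambda>i. 0), 1)"
    using l shifted_left_mult_scale[of w a l "1 / l" y] \<open>shifted_left_mult w a l y = a\<close>
    by (simp add: unitz_mult_shifted fun_eq_iff)
  have y': "(\<lambda>i. y i / l) \<in> evol_carrier" using y by (simp add: evol_carrier_def)
  then have left: "unitz_mult w ?inv (a, - l) = ((\<lambda>i. 0), 1)"
    using unitz_mult_comm[OF a y'] right by simp
  show "invertible_in unitz_carrier (unitz_mult w) ((\<lambda>i. 0), 1) (a, - l)"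
    unfolding invertible_in_def using y' by (intro conjI bexI[of _ ?inv] left right) simp_all
qed

lemma inj_on_unitz_mult_iff:
  fixes w :: "'i \<Rightarrow> 'i \<Rightarrow> complex"
  assumes l: "l \<noteq> 0"
  shows "inj_on (unitz_mult w (a, - l)) unitz_carrier
    \<longleftrightarrow> (\<forall>y\<in>evol_carrier. shifted_left_mult w a l y = (\<lambda>i. 0) \<longrightarrow> y = (\<lambda>i. 0))"
proof
  assume inj: "inj_on (unitz_mult w (a, - l)) unitz_carrier"
  show "\<forall>y\<in>evol_carrier. shifted_left_mult w a l y = (\<lambda>i. 0) \<longrightarrow> y = (\<lambda>i. 0)"
  proof (intro ballI impI)
    fix y :: "'i \<Rightarrow> complex"
    assume y: "y \<in> evol_carrier" and "shifted_left_mult w a l y = (\<lambda>i. 0)"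
    then have "unitz_mult w (a, - l) (y, 0) = unitz_mult w (a, - l) ((\<lambda>i. 0), 0)"
      by (simp add: unitz_mult_shifted shifted_left_mult_def evol_mult_def)
    moreover have "(\<lambda>i. 0 :: complex) \<in> evol_carrier" by (simp add: evol_carrier_def)
    ultimately show "y = (\<lambda>i. 0)" using inj y by (auto dest: inj_onD)
  qed
next
  assume kernel: "\<forall>y\<in>evol_carrier. shifted_left_mult w a l y = (\<lambda>i. 0) \<longrightarrow> y = (\<lambda>i. 0)"
  show "inj_on (unitz_mult w (a, - l)) unitz_carrier"
  proof (rule inj_onI, clarsimp)
    fix y y' :: "'i \<Rightarrow> complex" and \<nu> \<nu>' :: complex
    assume y: "y \<in> evol_carrier" "y' \<in> evol_carrier"
      and eq: "unitz_mult w (a, - l) (y, \<nu>) = unitz_mult w (a, - l) (y', \<nu>')"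
    then have "\<nu> = \<nu>'" using l by (simp add: unitz_mult_shifted)
    with eq have "shifted_left_mult w a l (\<lambda>i. y i - y' i) = (\<lambda>i. 0)"
      by (simp add: unitz_mult_shifted shifted_left_mult_diff fun_eq_iff)
    moreover have "(\<lambda>i. y i - y' i) \<in> evol_carrier"
      by (rule evol_carrier_supp_subset[OF y]) auto
    ultimately show "y = y' \<and> \<nu> = \<nu>'" using kernel \<open>\<nu> = \<nu>'\<close> by (auto simp: fun_eq_iff)
  qed
qed

lemma unitz_mult_image_eq_iff:
  fixes w :: "'i \<Rightarrow> 'i \<Rightarrow> complex"
  assumes l: "l \<noteq> 0" and w: "evol_coeffs w" and a: "a \<in> evol_carrier"
  shows "unitz_mult w (a, - l) ` unitz_carrier = unitz_carrier
    \<longleftrightarrow> (\<forall>z\<in>evol_carrier. \<exists>y\<in>evol_carrier. shifted_left_mult w a l y = z)"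
proof
  assume image: "unitz_mult w (a, - l) ` unitz_carrier = unitz_carrier"
  show "\<forall>z\<in>evol_carrier. \<exists>y\<in>evol_carrier. shifted_left_mult w a l y = z"
  proof
    fix z :: "'i \<Rightarrow> complex" assume "z \<in> evol_carrier"
    then have "(z, 0) \<in> unitz_mult w (a, - l) ` unitz_carrier" using image by simp
    then obtain y :: "'i \<Rightarrow> complex" and \<nu>
      where "y \<in> evol_carrier" "(z, 0) = unitz_mult w (a, - l) (y, \<nu>)"
      by auto
    then show "\<exists>y\<in>evol_carrier. shifted_left_mult w a l y = z"
      using l by (auto simp: unitz_mult_shifted)
  qed
next
  assume surj: "\<forall>z\<in>evol_carrier. \<exists>y\<in>evol_carrier. shifted_left_mult w a l y = z"
  show "unitz_mult w (a, - l) ` unitz_carrier = unitz_carrier"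
  proof
    show "unitz_mult w (a, - l) ` unitz_carrier \<subseteq> unitz_carrier"
    proof (rule image_subsetI)
      fix p :: "('i \<Rightarrow> complex) \<times> complex" assume "p \<in> unitz_carrier"
      then obtain y :: "'i \<Rightarrow> complex" and \<nu> where p: "p = (y, \<nu>)" and y: "y \<in> evol_carrier"
        by auto
      have "(\<lambda>i. shifted_left_mult w a l y i + \<nu> * a i) \<in> evol_carrier"
        by (rule evol_carrier_supp_subset[OF shifted_left_mult_carrier[OF w a y] a]) auto
      then show "unitz_mult w (a, - l) p \<in> unitz_carrier" by (simp add: p unitz_mult_shifted)
    qed
    show "unitz_carrier \<subseteq> unitz_mult w (a, - l) ` unitz_carrier"
    proof
      fix p :: "('i \<Rightarrow> complex) \<times> complex" assume "p \<in> unitz_carrier"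
      then obtain z :: "'i \<Rightarrow> complex" and \<mu> where p: "p = (z, \<mu>)" and z: "z \<in> evol_carrier"
        by auto
      define \<nu> where "\<nu> = - \<mu> / l"
      have "(\<lambda>i. z i - \<nu> * a i) \<in> evol_carrier"
        by (rule evol_carrier_supp_subset[OF z a]) auto
      then obtain y where y: "y \<in> evol_carrier"
        and Ty: "shifted_left_mult w a l y = (\<lambda>i. z i - \<nu> * a i)"
        using surj by blast
      have "unitz_mult w (a, - l) (y, \<nu>) = p" using l by (simp add: p Ty unitz_mult_shifted \<nu>_def)
      then show "p \<in> unitz_mult w (a, - l) ` unitz_carrier" using y by force
    qed
  qed
qed

text \<open>The unitization is commutative, so R_(a - \<lambda>) = L_(a - \<lambda>).\<close>
lemma m_invertible_unitz_iff:
  fixes w :: "'i \<Rightarrow> 'i \<Rightarrow> complex"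
  assumes l: "l \<noteq> 0" and w: "evol_coeffs w" and a: "a \<in> evol_carrier"
  shows "m_invertible_in unitz_carrier (unitz_mult w) (a, - l) \<longleftrightarrow>
    (\<forall>y\<in>evol_carrier. shifted_left_mult w a l y = (\<lambda>i. 0) \<longrightarrow> y = (\<lambda>i. 0)) \<and>
    (\<forall>z\<in>evol_carrier. \<exists>y\<in>evol_carrier. shifted_left_mult w a l y = z)"
proof -
  have "bij_betw (\<lambda>p. unitz_mult w p (a, - l)) unitz_carrier unitz_carrier
      \<longleftrightarrow> bij_betw (unitz_mult w (a, - l)) unitz_carrier unitz_carrier"
    by (rule bij_betw_cong) (auto intro: unitz_mult_comm[OF _ a])
  then show ?thesis
    using inj_on_unitz_mult_iff[OF l, where w = w and a = a] unitz_mult_image_eq_iff[OF l w a]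
    by (simp add: m_invertible_in_def bij_betw_def)
qed

lemma char_matrix_eq_minus:
  assumes "A \<in> carrier_mat n n"
  shows "char_matrix A e = A - e \<cdot>\<^sub>m 1\<^sub>m n"
  using assms by (auto simp: char_matrix_def)

lemma char_mat_mult_vec:
  fixes A :: "'a :: comm_ring_1 mat"
  assumes "A \<in> carrier_mat n n" and v: "v \<in> carrier_vec n"
  shows "(A - e \<cdot>\<^sub>m 1\<^sub>m n) *\<^sub>v v = A *\<^sub>v v - e \<cdot>\<^sub>v v"
proof -
  have "(e \<cdot>\<^sub>m 1\<^sub>m n) *\<^sub>v v = e \<cdot>\<^sub>v v"
    using v by (intro eq_vecI)
      (auto simp: scalar_prod_def if_distrib[of "\<lambda>x. e * x"] if_distrib[of "\<lambda>x. x * _"] sum.delta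
        cong: if_cong)
  then show ?thesis using assms by (simp add: minus_mult_distrib_mat_vec)
qed

lemma eigenvalue_iff_kernel:
  fixes A :: "'a :: field mat"
  assumes "A \<in> carrier_mat n n"
  shows "eigenvalue A e \<longleftrightarrow> (\<exists>v\<in>carrier_vec n. v \<noteq> 0\<^sub>v n \<and> (A - e \<cdot>\<^sub>m 1\<^sub>m n) *\<^sub>v v = 0\<^sub>v n)"
  using eigenvalue_char_matrix[OF assms] char_matrix_eq_minus[OF assms] by auto

lemma not_eigenvalue_imp_solvable:
  fixes A :: "'a :: field mat"
  assumes A: "A \<in> carrier_mat n n" and "\<not> eigenvalue A e" and b: "b \<in> carrier_vec n"
  shows "\<exists>x\<in>carrier_vec n. (A - e \<cdot>\<^sub>m 1\<^sub>m n) *\<^sub>v x = b"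
proof -
  let ?N = "A - e \<cdot>\<^sub>m 1\<^sub>m n"
  have N: "?N \<in> carrier_mat n n" by (rule minus_carrier_mat) simp
  have "det ?N \<noteq> 0"
    using assms eigenvalue_det[OF A] char_matrix_eq_minus[OF A] by simp
  from det_non_zero_imp_unit[OF N this, of "()"]
  obtain B where B: "B \<in> carrier_mat n n" and NB: "?N * B = 1\<^sub>m n"
    unfolding Units_def ring_mat_simps by auto
  have "?N *\<^sub>v (B *\<^sub>v b) = (?N * B) *\<^sub>v b"
    using N B b by (simp add: assoc_mult_mat_vec)
  then show ?thesis using NB B b by (intro bexI[of _ "B *\<^sub>v b"]) auto
qed

lemma index_W_mat_mult_D_mat:
  assumes "p < m" "q < m"
  shows "(W_mat w f m * D_mat a f m) $$ (p, q) = w (f p) (f q) * a (f q)"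
proof -
  have "(W_mat w f m * D_mat a f m) $$ (p, q) = (\<Sum>r<m. w (f p) (f r) * (if r = q then a (f r) else 0))"
    using assms by (simp add: W_mat_def D_mat_def scalar_prod_def atLeast0LessThan)
  also have "\<dots> = (\<Sum>r<m. if r = q then w (f p) (f q) * a (f q) else 0)"
    by (rule sum.cong) auto
  also have "\<dots> = w (f p) (f q) * a (f q)" using assms by simp
  finally show ?thesis .
qed

subsection \<open>Coordinates on B0(a) \<union> B1(a)\<close>

locale evol_enumeration =
  fixes w :: "'i \<Rightarrow> 'i \<Rightarrow> complex" and a :: "'i \<Rightarrow> complex" and f :: "nat \<Rightarrow> 'i" and m :: nat
  assumes bij: "bij_betw f {0..<m} (supp_el a \<union> B1_idx w a)"
begin

abbreviation S :: "'i set" where "S \<equiv> supp_el a \<union> B1_idx w a"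
abbreviation M :: "complex mat" where "M \<equiv> W_mat w f m * D_mat a f m"

definition coord_vec :: "('i \<Rightarrow> complex) \<Rightarrow> complex vec" where
  "coord_vec y = vec m (\<lambda>q. y (f q))"

definition extend_coord_vec :: "complex vec \<Rightarrow> ('i \<Rightarrow> complex) \<Rightarrow> 'i \<Rightarrow> complex" where
  "extend_coord_vec \<beta> h = (\<lambda>i. if i \<in> S then \<beta> $ the_inv_into {0..<m} f i else h i)"

lemma finite_S: "finite S"
  using bij_betw_finite[OF bij] by simp

lemma M_carrier: "M \<in> carrier_mat m m"
  by (auto simp: W_mat_def D_mat_def)

lemma coord_vec_carrier [simp]: "coord_vec y \<in> carrier_vec m"
  by (simp add: coord_vec_def)

lemma coord_vec_zero [simp]: "coord_vec (\<lambda>i. 0) = 0\<^sub>v m"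
  by (simp add: coord_vec_def zero_vec_def)

lemma coord_vec_extend_coord_vec:
  assumes "\<beta> \<in> carrier_vec m"
  shows "coord_vec (extend_coord_vec \<beta> h) = \<beta>"
proof (rule eq_vecI)
  fix q assume "q < dim_vec \<beta>"
  then have "q \<in> {0..<m}" using assms by simp
  then show "coord_vec (extend_coord_vec \<beta> h) $ q = \<beta> $ q"
    using bij_betw_apply[OF bij] the_inv_into_f_f[OF bij_betw_imp_inj_on[OF bij]]
    by (simp add: coord_vec_def extend_coord_vec_def)
qed (use assms in \<open>simp add: coord_vec_def\<close>)

lemma extend_coord_vec_outside: "i \<notin> S \<Longrightarrow> extend_coord_vec \<beta> h i = h i"
  by (simp add: extend_coord_vec_def)

lemma extend_coord_vec_carrier:
  assumes "h \<in> evol_carrier"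
  shows "extend_coord_vec \<beta> h \<in> evol_carrier"
proof -
  have "{i. extend_coord_vec \<beta> h i \<noteq> 0} \<subseteq> S \<union> {i. h i \<noteq> 0}"
    by (auto simp: extend_coord_vec_def)
  then show ?thesis
    using finite_S assms unfolding evol_carrier_def by (auto intro: finite_subset)
qed

lemma eq_if_coord_vec_eq:
  assumes "coord_vec y = coord_vec z" and "\<And>i. i \<notin> S \<Longrightarrow> y i = z i"
  shows "y = z"
proof
  fix i show "y i = z i"
  proof (cases "i \<in> S")
    case True
    then obtain q where "q < m" "i = f q"
      using bij_betw_imp_surj_on[OF bij] by (metis atLeastLessThan_iff imageE)
    then show ?thesis
      using arg_cong[OF assms(1), of "\<lambda>v. v $ q"] by (simp add: coord_vec_def)
  qed (rule assms(2))
qed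

lemma evol_mult_outside: "i \<notin> S \<Longrightarrow> evol_mult w a y i = 0"
  unfolding evol_mult_def by (rule sum.neutral) (auto simp: B1_idx_def supp_el_def)

lemma evol_mult_reindex: "evol_mult w a y i = (\<Sum>q<m. w i (f q) * a (f q) * y (f q))"
proof -
  have "evol_mult w a y i = (\<Sum>j\<in>S. a j * y j * w i j)"
    unfolding evol_mult_def
    by (rule sum.mono_neutral_left) (use finite_S in \<open>auto simp: supp_el_def\<close>)
  also have "\<dots> = (\<Sum>q<m. a (f q) * y (f q) * w i (f q))"
    using sum.reindex_bij_betw[OF bij, of "\<lambda>j. a j * y j * w i j"] by (simp add: atLeast0LessThan)
  finally show ?thesis by (simp add: ac_simps)
qed

lemma M_mult_coord_vec: "M *\<^sub>v coord_vec y = coord_vec (evol_mult w a y)"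
proof (rule eq_vecI)
  fix p assume "p < dim_vec (coord_vec (evol_mult w a y))"
  then have p: "p < m" by (simp add: coord_vec_def)
  have "dim_row M = m" "dim_col M = m" using M_carrier by auto
  then have "(M *\<^sub>v coord_vec y) $ p = (\<Sum>q<m. M $$ (p, q) * y (f q))"
    using p by (simp add: coord_vec_def scalar_prod_def atLeast0LessThan)
  also have "\<dots> = evol_mult w a y (f p)"
    unfolding evol_mult_reindex using p by (intro sum.cong) (auto simp: index_W_mat_mult_D_mat)
  finally show "(M *\<^sub>v coord_vec y) $ p = coord_vec (evol_mult w a y) $ p"
    using p by (simp add: coord_vec_def)
qed (simp add: coord_vec_def W_mat_def)

lemma char_mat_mult_coord_vec:
  "(M - l \<cdot>\<^sub>m 1\<^sub>m m) *\<^sub>v coord_vec y = coord_vec (shifted_left_mult w a l y)"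
  unfolding char_mat_mult_vec[OF M_carrier coord_vec_carrier] M_mult_coord_vec
  by (rule eq_vecI) (auto simp: coord_vec_def shifted_left_mult_def)

lemma shifted_left_mult_outside: "i \<notin> S \<Longrightarrow> shifted_left_mult w a l y i = - l * y i"
  by (simp add: shifted_left_mult_def evol_mult_outside)

lemma shifted_left_mult_solvable_iff:
  assumes l: "l \<noteq> 0" and z: "z \<in> evol_carrier"
  shows "(\<exists>y\<in>evol_carrier. shifted_left_mult w a l y = z)
    \<longleftrightarrow> (\<exists>\<beta>\<in>carrier_vec m. (M - l \<cdot>\<^sub>m 1\<^sub>m m) *\<^sub>v \<beta> = coord_vec z)"
proof
  assume "\<exists>y\<in>evol_carrier. shifted_left_mult w a l y = z"
  then obtain y where "shifted_left_mult w a l y = z" ..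
  then have "(M - l \<cdot>\<^sub>m 1\<^sub>m m) *\<^sub>v coord_vec y = coord_vec z"
    by (simp add: char_mat_mult_coord_vec)
  then show "\<exists>\<beta>\<in>carrier_vec m. (M - l \<cdot>\<^sub>m 1\<^sub>m m) *\<^sub>v \<beta> = coord_vec z"
    by (intro bexI[of _ "coord_vec y"] coord_vec_carrier)
next
  assume "\<exists>\<beta>\<in>carrier_vec m. (M - l \<cdot>\<^sub>m 1\<^sub>m m) *\<^sub>v \<beta> = coord_vec z"
  then obtain \<beta> where \<beta>: "\<beta> \<in> carrier_vec m" and sol: "(M - l \<cdot>\<^sub>m 1\<^sub>m m) *\<^sub>v \<beta> = coord_vec z" ..
  define y where "y = extend_coord_vec \<beta> (\<lambda>i. - z i / l)"
  have y: "y \<in> evol_carrier"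
    unfolding y_def by (rule extend_coord_vec_carrier) (use z in \<open>simp add: evol_carrier_def\<close>)
  have Ty: "shifted_left_mult w a l y = z"
  proof (rule eq_if_coord_vec_eq)
    show "coord_vec (shifted_left_mult w a l y) = coord_vec z"
      using sol by (simp add: y_def char_mat_mult_coord_vec[symmetric] coord_vec_extend_coord_vec[OF \<beta>])
  next
    fix i assume "i \<notin> S"
    then show "shifted_left_mult w a l y i = z i"
      using l by (simp add: shifted_left_mult_outside y_def extend_coord_vec_outside)
  qed
  show "\<exists>y\<in>evol_carrier. shifted_left_mult w a l y = z"
    using Ty y by (rule bexI[of _ y])
qed

lemma shifted_left_mult_injective_iff:
  assumes l: "l \<noteq> 0"
  shows "(\<forall>y\<in>evol_carrier. shifted_left_mult w a l y = (\<lambda>i. 0) \<longrightarrow> y = (\<lambda>i. 0))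
    \<longleftrightarrow> \<not> eigenvalue M l"
proof
  assume inj: "\<forall>y\<in>evol_carrier. shifted_left_mult w a l y = (\<lambda>i. 0) \<longrightarrow> y = (\<lambda>i. 0)"
  show "\<not> eigenvalue M l"
  proof
    assume "eigenvalue M l"
    then obtain v where v: "v \<in> carrier_vec m" "v \<noteq> 0\<^sub>v m" and kernel: "(M - l \<cdot>\<^sub>m 1\<^sub>m m) *\<^sub>v v = 0\<^sub>v m"
      unfolding eigenvalue_iff_kernel[OF M_carrier] by blast
    define y where "y = extend_coord_vec v (\<lambda>i. 0)"
    have y: "y \<in> evol_carrier"
      unfolding y_def by (rule extend_coord_vec_carrier) (simp add: evol_carrier_def)
    have "shifted_left_mult w a l y = (\<lambda>i. 0)"
    proof (rule eq_if_coord_vec_eq)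
      show "coord_vec (shifted_left_mult w a l y) = coord_vec (\<lambda>i. 0)"
        using kernel by (simp add: y_def char_mat_mult_coord_vec[symmetric] coord_vec_extend_coord_vec[OF v(1)])
    qed (simp add: shifted_left_mult_outside y_def extend_coord_vec_outside)
    with inj y have "y = (\<lambda>i. 0)" by simp
    moreover have "coord_vec y = v"
      unfolding y_def by (rule coord_vec_extend_coord_vec[OF v(1)])
    ultimately have "v = 0\<^sub>v m" by simp
    with v(2) show False ..
  qed
next
  assume no_eigenvalue: "\<not> eigenvalue M l"
  show "\<forall>y\<in>evol_carrier. shifted_left_mult w a l y = (\<lambda>i. 0) \<longrightarrow> y = (\<lambda>i. 0)"
  proof (intro ballI impI)
    fix y assume Ty: "shifted_left_mult w a l y = (\<lambda>i. 0)"
    then have "(M - l \<cdot>\<^sub>m 1\<^sub>m m) *\<^sub>v coord_vec y = 0\<^sub>v m"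
      by (simp add: char_mat_mult_coord_vec)
    then have "coord_vec y = coord_vec (\<lambda>i. 0)"
      using no_eigenvalue unfolding eigenvalue_iff_kernel[OF M_carrier] by auto
    then show "y = (\<lambda>i. 0)"
    proof (rule eq_if_coord_vec_eq)
      fix i assume "i \<notin> S"
      then show "y i = 0" using fun_cong[OF Ty, of i] l by (simp add: shifted_left_mult_outside)
    qed
  qed
qed

lemma invertible_unitz_iff_solvable:
  assumes "l \<noteq> 0" "a \<in> evol_carrier"
  shows "invertible_in unitz_carrier (unitz_mult w) ((\<lambda>i. 0), 1) (a, - l)
    \<longleftrightarrow> (\<exists>\<beta>\<in>carrier_vec m. (M - l \<cdot>\<^sub>m 1\<^sub>m m) *\<^sub>v \<beta> = vec m (\<lambda>i. a (f i)))"
  using invertible_unitz_iff[OF assms] shifted_left_mult_solvable_iff[OF assms]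
  by (simp add: coord_vec_def)

lemma m_invertible_unitz_iff_not_eigenvalue:
  assumes l: "l \<noteq> 0" and "evol_coeffs w" "a \<in> evol_carrier"
  shows "m_invertible_in unitz_carrier (unitz_mult w) (a, - l) \<longleftrightarrow> \<not> eigenvalue M l"
proof -
  have "\<forall>z\<in>evol_carrier. \<exists>y\<in>evol_carrier. shifted_left_mult w a l y = z" if "\<not> eigenvalue M l"
    using shifted_left_mult_solvable_iff[OF l] not_eigenvalue_imp_solvable[OF M_carrier that]
    by simp
  then show ?thesis
    using m_invertible_unitz_iff[OF l assms(2,3)] shifted_left_mult_injective_iff[OF l] by blast
qed

end

theorem proposition5p5:
  fixes w :: "'i \<Rightarrow> 'i \<Rightarrow> complex" and a :: "'i \<Rightarrow> complex"
    and f :: "nat \<Rightarrow> 'i" and k m :: nat and l :: complex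
  assumes "evol_coeffs w"
    and "\<not> nonzero_trivial_evol w"
    and "a \<in> evol_carrier" and "a \<noteq> (\<lambda>i. 0)"
    and "k = card (supp_el a)"
    and "m = card (supp_el a \<union> B1_idx w a)"
    and "bij_betw f {0..<m} (supp_el a \<union> B1_idx w a)"
    and "f ` {0..<k} = supp_el a"
  shows "(l \<in> evol_m_spectrum w a \<longleftrightarrow> l = 0 \<or> eigenvalue (W_mat w f m * D_mat a f m) l)
       \<and> (l \<in> evol_spectrum w a \<longleftrightarrow> l = 0 \<or>
            \<not> (\<exists>\<beta>\<in>carrier_vec m. (W_mat w f m * D_mat a f m - l \<cdot>\<^sub>m 1\<^sub>m m) *\<^sub>v \<beta> = vec m (\<lambda>i. a (f i))))
       \<and> (l \<in> evol_spectrum w a \<longrightarrow> l \<in> evol_m_spectrum w a)"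
proof -
  interpret evol_enumeration w a f m
    using assms(7) by unfold_locales
  have "\<not> (\<exists>u. is_unit_of_A w u)"
    using assms(2) unit_imp_nonzero_trivial_evol by blast
  then have spectrum: "l \<in> evol_spectrum w a
      \<longleftrightarrow> \<not> invertible_in unitz_carrier (unitz_mult w) ((\<lambda>i. 0), 1) (a, - l)"
    and m_spectrum: "l \<in> evol_m_spectrum w a
      \<longleftrightarrow> \<not> m_invertible_in unitz_carrier (unitz_mult w) (a, - l)"
    by (simp_all add: evol_spectrum_def evol_m_spectrum_def)
  have one: "((\<lambda>i. 0), 1) \<in> unitz_carrier" by (simp add: evol_carrier_def)
  have subset: "l \<in> evol_spectrum w a \<longrightarrow> l \<in> evol_m_spectrum w a"
    unfolding spectrum m_spectrum
    by (rule impI, erule contrapos_nn, erule m_invertible_in_imp_invertible_in[OF _ one])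
  show ?thesis
  proof (cases "l = 0")
    case True
    then show ?thesis using spectrum subset not_invertible_unitz_zero[of w a] by simp
  next
    case False
    then show ?thesis
      using spectrum m_spectrum subset invertible_unitz_iff_solvable[OF False assms(3)]
        m_invertible_unitz_iff_not_eigenvalue[OF False assms(1,3)]
      by simp
  qed
qed

end
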